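(* Let $\lambda>2$, $n\ge1$, $d_\sigma>0$, let $\xi=(\mathcal{N}_{1:\lambda},\mathcal{N}_2,\ldots,\mathcal{N}_n)$ be a random vector with independent coordinates, where $\mathcal{N}_{1:\lambda}$ is distributed as the minimum of $\lambda$ i.i.d. standard normal random variables and $\mathcal{N}_i\sim\mathcal{N}(0,1)$ for $i\ge2$, and let $\eta:=\exp\!\big(\frac{1}{2d_\sigma}(\|\xi\|^2/n-1)\big)$. Then there exists $\alpha>0$ such that $\mathbb{E}(\eta^{-\alpha})-1<0$. *)

theory Defs
  imports "HOL-Probability.Probability"
begin

definition std_normal :: "real measure" where
  "std_normal = density lborel std_normal_density"

definition min_normal :: "nat \<Rightarrow> real measure" where
  "min_normal lam = distr (PiM {..<lam} (\<lambda>_. std_normal)) borel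
      (\<lambda>\<omega>. Min (\<omega> ` {..<lam}))"

text \<open>Law of xi = (N_{1:lam}, N_2, ..., N_n) with independent coordinates;
  coordinates are indexed 0..n-1, coordinate 0 being N_{1:lam}.\<close>
definition xi_law :: "nat \<Rightarrow> nat \<Rightarrow> (nat \<Rightarrow> real) measure" where
  "xi_law lam n = PiM {..<n} (\<lambda>i. if i = 0 then min_normal lam else std_normal)"

definition eta :: "nat \<Rightarrow> real \<Rightarrow> (nat \<Rightarrow> real) \<Rightarrow> real" where
  "eta n d_sigma \<omega> = exp ((1 / (2 * d_sigma)) * ((\<Sum>i<n. (\<omega> i)\<^sup>2) / real n - 1))"

end

theory Submission
  imports Defs
begin

text \<open>
  For \<alpha> = 2 d n c the integrand is \<eta>^(-\<alpha>) = e^(cn) \<Prod>_i e^(-c \<xi>_i^2), so by independence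
  E \<eta>^(-\<alpha>) = e^(cn) A B^(n-1) with A = E e^(-c N_{1:\<lambda>}^2) and B = E e^(-c N^2).
  From e^(-x) \<le> 1 - x + x^2/2 one gets B \<le> 1 - c + 3c^2/2. The minimum m of \<lambda> \<ge> 3 normals
  x, y, z, \<dots> lies below each of them, so the negative parts a, b, c' of x, y, z lie in [0, |m|]
  and m^2 \<ge> a^2 + b^2 + c'^2 - ab - bc' - c'a. The right-hand side has expectation
  \<gamma> = 3/2 - 3/(2\<pi>) > 1, whence A \<le> 1 - \<gamma>c + O(c^2). Altogether
  E \<eta>^(-\<alpha>) \<le> exp(-(\<gamma> - 1)c + O(c^2)) < 1 for small c > 0.
\<close>

lemma exp_neg_le_quadratic:
  fixes x :: real
  assumes "0 \<le> x"
  shows "exp (- x) \<le> 1 - x + x\<^sup>2 / 2"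
proof -
  let ?f = "\<lambda>t::real. 1 - t + t\<^sup>2 / 2 - exp (- t)"
  have "?f 0 \<le> ?f x"
  proof (rule DERIV_nonneg_imp_nondecreasing[OF assms])
    fix t :: real
    have "(?f has_real_derivative (t - 1 + exp (- t))) (at t)"
      by (auto intro!: derivative_eq_intros simp: power2_eq_square)
    moreover have "0 \<le> t - 1 + exp (- t)"
      using exp_ge_add_one_self[of "- t"] by linarith
    ultimately show "\<exists>y. (?f has_real_derivative y) (at t) \<and> 0 \<le> y" by blast
  qed
  then show ?thesis by simp
qed

definition neg_part :: "real \<Rightarrow> real" where
  "neg_part x = max 0 (- x)"

lemma neg_part_nonneg: "0 \<le> neg_part x"
  unfolding neg_part_def by simp

lemma neg_part_le_abs: "neg_part x \<le> \<bar>x\<bar>"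
  unfolding neg_part_def by simp

lemma neg_part_antimono: "x \<le> y \<Longrightarrow> neg_part y \<le> neg_part x"
  unfolding neg_part_def by simp

lemma neg_part_eq: "neg_part x = (\<bar>x\<bar> - x) / 2"
  unfolding neg_part_def by auto

lemma neg_part_sq_eq: "(neg_part x)\<^sup>2 = (x\<^sup>2 - x * \<bar>x\<bar>) / 2"
  unfolding neg_part_def by (cases "x \<ge> 0") (auto simp: power2_eq_square)

lemma borel_measurable_neg_part [measurable]: "neg_part \<in> borel_measurable borel"
  unfolding neg_part_def by measurable

definition quad_spread :: "real \<Rightarrow> real \<Rightarrow> real \<Rightarrow> real" where
  "quad_spread a b c = a\<^sup>2 + b\<^sup>2 + c\<^sup>2 - a * b - b * c - c * a"

lemma quad_spread_commute: "quad_spread a b c = quad_spread b a c"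
  and quad_spread_rotate: "quad_spread a b c = quad_spread c a b"
  unfolding quad_spread_def by (simp_all add: algebra_simps)

lemma quad_spread_nonneg: "0 \<le> quad_spread a b c"
proof -
  have "2 * quad_spread a b c = (a - b)\<^sup>2 + (b - c)\<^sup>2 + (c - a)\<^sup>2"
    unfolding quad_spread_def by (simp add: power2_eq_square algebra_simps)
  moreover have "0 \<le> (a - b)\<^sup>2 + (b - c)\<^sup>2 + (c - a)\<^sup>2"
    by simp
  ultimately show ?thesis by linarith
qed

lemma quad_spread_le_first_sq:
  assumes "0 \<le> b" "b \<le> a" "0 \<le> c" "c \<le> a"
  shows "quad_spread a b c \<le> a\<^sup>2"
proof -
  have "b * b \<le> a * b" "c * c \<le> c * a" "0 \<le> b * c"
    using assms by (auto intro: mult_right_mono mult_left_mono)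
  then show ?thesis unfolding quad_spread_def by (simp add: power2_eq_square)
qed

lemma quad_spread_le_sq:
  assumes "0 \<le> a" "0 \<le> b" "0 \<le> c" and "a \<le> t" "b \<le> t" "c \<le> t"
  shows "quad_spread a b c \<le> t\<^sup>2"
proof -
  have sq_le: "s\<^sup>2 \<le> t\<^sup>2" if "0 \<le> s" "s \<le> t" for s
    using that by (simp add: power_mono)
  consider "b \<le> a" "c \<le> a" | "a \<le> b" "c \<le> b" | "a \<le> c" "b \<le> c" by linarith
  then show ?thesis
  proof cases
    case 1
    then show ?thesis
      using quad_spread_le_first_sq[of b a c] sq_le[of a] assms by linarith
  next
    case 2
    then show ?thesis
      using quad_spread_le_first_sq[of a b c] sq_le[of b] assms quad_spread_commute[of a b c]
      by linarith
  next
    case 3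
    then show ?thesis
      using quad_spread_le_first_sq[of a c b] sq_le[of c] assms quad_spread_rotate[of a b c]
      by linarith
  qed
qed

lemma quad_spread_sq_le:
  assumes "0 \<le> a" "0 \<le> b" "0 \<le> c"
  shows "(quad_spread a b c)\<^sup>2 \<le> 3 * (a ^ 4 + b ^ 4 + c ^ 4)"
proof -
  have "quad_spread a b c \<le> a\<^sup>2 + b\<^sup>2 + c\<^sup>2"
    using assms mult_nonneg_nonneg[of a b] mult_nonneg_nonneg[of b c] mult_nonneg_nonneg[of c a]
    unfolding quad_spread_def by linarith
  then have "(quad_spread a b c)\<^sup>2 \<le> (a\<^sup>2 + b\<^sup>2 + c\<^sup>2)\<^sup>2"
    using quad_spread_nonneg by (intro power_mono) auto
  also have "\<dots> \<le> 3 * (a ^ 4 + b ^ 4 + c ^ 4)"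
  proof -
    have "3 * (a ^ 4 + b ^ 4 + c ^ 4) - (a\<^sup>2 + b\<^sup>2 + c\<^sup>2)\<^sup>2
        = (a\<^sup>2 - b\<^sup>2)\<^sup>2 + (b\<^sup>2 - c\<^sup>2)\<^sup>2 + (c\<^sup>2 - a\<^sup>2)\<^sup>2"
      by (simp add: power2_eq_square power4_eq_xxxx algebra_simps)
    moreover have "0 \<le> (a\<^sup>2 - b\<^sup>2)\<^sup>2 + (b\<^sup>2 - c\<^sup>2)\<^sup>2 + (c\<^sup>2 - a\<^sup>2)\<^sup>2"
      by simp
    ultimately show ?thesis by linarith
  qed
  finally show ?thesis .
qed

lemma exp_neg_min_sq_le:
  assumes "0 < c" and "m \<le> x" "m \<le> y" "m \<le> z"
  shows "exp (- c * m\<^sup>2)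
    \<le> 1 - c * quad_spread (neg_part x) (neg_part y) (neg_part z) + 3/2 * c\<^sup>2 * (x ^ 4 + y ^ 4 + z ^ 4)"
proof -
  let ?a = "neg_part x" and ?b = "neg_part y" and ?c = "neg_part z"
  let ?G = "quad_spread ?a ?b ?c"
  have "?G \<le> (neg_part m)\<^sup>2"
    using assms by (intro quad_spread_le_sq neg_part_nonneg neg_part_antimono)
  also have "\<dots> \<le> m\<^sup>2"
    using neg_part_le_abs[of m] neg_part_nonneg[of m] power_mono[of "neg_part m" "\<bar>m\<bar>" 2] by simp
  finally have "exp (- c * m\<^sup>2) \<le> exp (- (c * ?G))"
    using \<open>0 < c\<close> by simp
  also have "\<dots> \<le> 1 - c * ?G + c\<^sup>2 * ?G\<^sup>2 / 2"
    using exp_neg_le_quadratic[of "c * ?G"] quad_spread_nonneg \<open>0 < c\<close>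
    by (simp add: power_mult_distrib)
  also have "c\<^sup>2 * ?G\<^sup>2 / 2 \<le> 3/2 * c\<^sup>2 * (x ^ 4 + y ^ 4 + z ^ 4)"
  proof -
    have pow4: "(neg_part s) ^ 4 \<le> s ^ 4" for s
      using neg_part_le_abs[of s] neg_part_nonneg[of s] power_mono[of "neg_part s" "\<bar>s\<bar>" 4] by simp
    have "?G\<^sup>2 \<le> 3 * (?a ^ 4 + ?b ^ 4 + ?c ^ 4)"
      by (intro quad_spread_sq_le neg_part_nonneg)
    also have "\<dots> \<le> 3 * (x ^ 4 + y ^ 4 + z ^ 4)"
      using pow4[of x] pow4[of y] pow4[of z] by simp
    finally have "?G\<^sup>2 \<le> 3 * (x ^ 4 + y ^ 4 + z ^ 4)" .
    then have "c\<^sup>2 * ?G\<^sup>2 \<le> c\<^sup>2 * (3 * (x ^ 4 + y ^ 4 + z ^ 4))"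
      by (rule mult_left_mono) simp
    then have "c\<^sup>2 * ?G\<^sup>2 / 2 \<le> c\<^sup>2 * (3 * (x ^ 4 + y ^ 4 + z ^ 4)) / 2"
      by (rule divide_right_mono) simp
    also have "\<dots> = 3/2 * c\<^sup>2 * (x ^ 4 + y ^ 4 + z ^ 4)"
      by simp
    finally show ?thesis .
  qed
  finally show ?thesis by simp
qed

lemma prob_space_std_normal: "prob_space std_normal"
  unfolding std_normal_def by (rule prob_space_normal_density) simp

lemma sets_std_normal: "sets std_normal = sets borel"
  unfolding std_normal_def by simp

lemma integral_std_normal:
  assumes [measurable]: "f \<in> borel_measurable borel"
  shows "(\<integral>x. f x \<partial>std_normal) = (\<integral>x. std_normal_density x * f x \<partial>lborel)"
  unfolding std_normal_def by (subst integral_density) auto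

lemma integrable_std_normal_iff:
  assumes [measurable]: "f \<in> borel_measurable borel"
  shows "integrable std_normal f \<longleftrightarrow> integrable lborel (\<lambda>x. std_normal_density x * f x)"
  unfolding std_normal_def by (subst integrable_density) auto

lemma integrable_std_normal_power: "integrable std_normal (\<lambda>x. x ^ k)"
  by (simp add: integrable_std_normal_iff integrable_std_normal_moment)

lemma integral_std_normal_power2: "(\<integral>x. x\<^sup>2 \<partial>std_normal) = 1"
  using integral_std_normal_moment_even[of 1] by (simp add: integral_std_normal)

lemma integral_std_normal_power4: "(\<integral>x. x ^ 4 \<partial>std_normal) = 3"
  using integral_std_normal_moment_even[of 2] by (simp add: integral_std_normal fact_numeral)

lemma integrable_std_normal_odd_square: "integrable lborel (\<lambda>x. std_normal_density x * (x * \<bar>x\<bar>))"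
proof -
  have "integrable lborel (\<lambda>x. std_normal_density x * \<bar>x\<bar> ^ 2)"
    by (rule integrable_std_normal_moment_abs)
  then show ?thesis
    by (rule Bochner_Integration.integrable_bound) (auto simp: abs_mult power2_eq_square)
qed

lemma integral_std_normal_odd_square: "(\<integral>x. std_normal_density x * (x * \<bar>x\<bar>) \<partial>lborel) = 0"
proof -
  have "(\<integral>x. std_normal_density x * (x * \<bar>x\<bar>) \<partial>lborel)
      = \<bar>-1::real\<bar> *\<^sub>R (\<integral>x. std_normal_density (0 + (-1) * x) * ((0 + (-1) * x) * \<bar>0 + (-1) * x\<bar>) \<partial>lborel)"
    by (rule lborel_integral_real_affine) simp
  also have "\<dots> = - (\<integral>x. std_normal_density x * (x * \<bar>x\<bar>) \<partial>lborel)"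
    by (simp add: std_normal_density_def)
  finally show ?thesis by simp
qed

lemma has_bochner_integral_std_normal_neg_part:
  "has_bochner_integral std_normal neg_part (sqrt (2 / pi) / 2)"
proof -
  have "has_bochner_integral lborel
      (\<lambda>x. (std_normal_density x * \<bar>x\<bar> ^ (2 * 0 + 1) - std_normal_density x * x ^ (2 * 0 + 1)) / 2)
      ((sqrt (2 / pi) * 2 ^ 0 * fact 0 - 0) / 2)"
    by (intro has_bochner_integral_divide_zero has_bochner_integral_diff
        std_normal_moment_abs_odd std_normal_moment_odd)
  then show ?thesis
    unfolding std_normal_def
    by (subst has_bochner_integral_density) (auto simp: neg_part_eq algebra_simps)
qed

lemma has_bochner_integral_std_normal_neg_part_sq:
  "has_bochner_integral std_normal (\<lambda>x. (neg_part x)\<^sup>2) (1 / 2)"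
proof -
  have density_eq: "std_normal_density x * (neg_part x)\<^sup>2
      = (std_normal_density x * x ^ (2 * 1) - std_normal_density x * (x * \<bar>x\<bar>)) / 2" for x
    by (subst neg_part_sq_eq) (simp add: algebra_simps power2_eq_square)
  have "has_bochner_integral lborel
      (\<lambda>x. (std_normal_density x * x ^ (2 * 1) - std_normal_density x * (x * \<bar>x\<bar>)) / 2)
      ((fact (2 * 1) / (2 ^ 1 * fact 1) - 0) / 2)"
    using integrable_std_normal_odd_square integral_std_normal_odd_square
    by (intro has_bochner_integral_divide_zero has_bochner_integral_diff std_normal_moment_even)
       (simp add: has_bochner_integral_iff)
  then have "has_bochner_integral lborel (\<lambda>x. std_normal_density x * (neg_part x)\<^sup>2) (1 / 2)"
    by (simp add: density_eq)
  then show ?thesis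
    unfolding std_normal_def by (subst has_bochner_integral_density) auto
qed

lemma integrable_exp_neg_sq:
  assumes "prob_space M" "sets M = sets borel" "0 \<le> c"
  shows "integrable M (\<lambda>x::real. exp (- c * x\<^sup>2))"
proof -
  interpret prob_space M by fact
  have "(\<lambda>x::real. exp (- c * x\<^sup>2)) \<in> borel_measurable M"
    by (subst measurable_cong_sets[OF assms(2) refl]) measurable
  then show ?thesis
    by (rule integrable_const_bound[where B = 1, rotated]) (use assms(3) in auto)
qed

lemma integral_std_normal_exp_neg_sq_le:
  assumes "0 < c"
  shows "(\<integral>x. exp (- c * x\<^sup>2) \<partial>std_normal) \<le> 1 - c + 3/2 * c\<^sup>2"
proof -
  interpret prob_space std_normal by (rule prob_space_std_normal)
  have "(\<integral>x. exp (- c * x\<^sup>2) \<partial>std_normal) \<le> (\<integral>x. 1 - c * x\<^sup>2 + c\<^sup>2 / 2 * x ^ 4 \<partial>std_normal)"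
  proof (rule integral_mono)
    show "integrable std_normal (\<lambda>x. exp (- c * x\<^sup>2))"
      using assms by (intro integrable_exp_neg_sq prob_space_std_normal sets_std_normal) simp
    show "integrable std_normal (\<lambda>x. 1 - c * x\<^sup>2 + c\<^sup>2 / 2 * x ^ 4)"
      using integrable_std_normal_power by auto
    show "exp (- c * x\<^sup>2) \<le> 1 - c * x\<^sup>2 + c\<^sup>2 / 2 * x ^ 4" for x :: real
      using exp_neg_le_quadratic[of "c * x\<^sup>2"] assms
      by (simp add: power_mult_distrib power2_eq_square power4_eq_xxxx mult_ac)
  qed
  also have "\<dots> = 1 - c + 3/2 * c\<^sup>2"
    using integrable_std_normal_power[of 2] integrable_std_normal_power[of 4]
      integral_std_normal_power2 integral_std_normal_power4
    by (simp add: prob_space)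
  finally show ?thesis .
qed

lemma has_bochner_integral_PiM_prod:
  fixes M :: "'i \<Rightarrow> 'a measure" and f :: "'i \<Rightarrow> 'a \<Rightarrow> real"
  assumes "\<And>i. prob_space (M i)" and "finite I"
    and "\<And>i. i \<in> I \<Longrightarrow> integrable (M i) (f i)"
  shows "has_bochner_integral (PiM I M) (\<lambda>\<omega>. \<Prod>i\<in>I. f i (\<omega> i)) (\<Prod>i\<in>I. integral\<^sup>L (M i) (f i))"
proof -
  interpret product_sigma_finite M
    unfolding product_sigma_finite_def using assms(1) prob_space_imp_sigma_finite by blast
  show ?thesis
    using product_integral_prod[OF assms(2,3)] product_integrable_prod[OF assms(2,3)]
    by (simp add: has_bochner_integral_iff)
qed

lemma has_bochner_integral_PiM_prod_subset:
  fixes M :: "'i \<Rightarrow> 'a measure" and f :: "'i \<Rightarrow> 'a \<Rightarrow> real"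
  assumes "\<And>i. prob_space (M i)" and "finite I" and "J \<subseteq> I"
    and "\<And>i. i \<in> J \<Longrightarrow> integrable (M i) (f i)"
  shows "has_bochner_integral (PiM I M) (\<lambda>\<omega>. \<Prod>i\<in>J. f i (\<omega> i)) (\<Prod>i\<in>J. integral\<^sup>L (M i) (f i))"
proof -
  define g where "g i = (if i \<in> J then f i else (\<lambda>_. 1))" for i
  have "has_bochner_integral (PiM I M) (\<lambda>\<omega>. \<Prod>i\<in>I. g i (\<omega> i)) (\<Prod>i\<in>I. integral\<^sup>L (M i) (g i))"
    using assms by (intro has_bochner_integral_PiM_prod) (auto simp: g_def finite_measure.integrable_const[OF prob_space.axioms(1)[OF assms(1)]])
  moreover have "(\<Prod>i\<in>I. g i (\<omega> i)) = (\<Prod>i\<in>J. f i (\<omega> i))" for \<omega>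
    using assms(2,3) by (intro prod.mono_neutral_cong_right) (auto simp: g_def)
  moreover have "(\<Prod>i\<in>I. integral\<^sup>L (M i) (g i)) = (\<Prod>i\<in>J. integral\<^sup>L (M i) (f i))"
    using assms(1-3)
    by (intro prod.mono_neutral_cong_right) (auto simp: g_def prob_space.prob_space)
  ultimately show ?thesis by simp
qed

lemma prob_space_PiM_std_normal: "prob_space (PiM I (\<lambda>_. std_normal))"
  by (intro prob_space_PiM prob_space_std_normal)

lemma borel_measurable_Min_PiM_std_normal:
  assumes "finite I"
  shows "(\<lambda>\<omega>. Min (\<omega> ` I)) \<in> borel_measurable (PiM I (\<lambda>_. std_normal))"
proof -
  have "(\<lambda>\<omega>. \<omega> i) \<in> borel_measurable (PiM I (\<lambda>_. std_normal))" if "i \<in> I" for i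
    using measurable_component_singleton[OF that, of "\<lambda>_. std_normal"]
    by (simp add: measurable_cong_sets[OF refl sets_std_normal])
  from borel_measurable_Min[OF assms this] show ?thesis by simp
qed

lemma prob_space_min_normal: "prob_space (min_normal lam)"
  unfolding min_normal_def
  by (intro prob_space.prob_space_distr prob_space_PiM_std_normal
      borel_measurable_Min_PiM_std_normal finite_lessThan)

lemma sets_min_normal: "sets (min_normal lam) = sets borel"
  unfolding min_normal_def by simp

lemma has_bochner_integral_PiM_component:
  fixes M :: "'i \<Rightarrow> 'a measure" and f :: "'a \<Rightarrow> real"
  assumes "\<And>i. prob_space (M i)" and "finite I" and "i \<in> I"
    and "has_bochner_integral (M i) f r"
  shows "has_bochner_integral (PiM I M) (\<lambda>\<omega>. f (\<omega> i)) r"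
  using has_bochner_integral_PiM_prod_subset[of M I "{i}" "\<lambda>_. f"] assms
  by (simp add: has_bochner_integral_iff)

lemma has_bochner_integral_PiM_component_pair:
  fixes M :: "'i \<Rightarrow> 'a measure" and f g :: "'a \<Rightarrow> real"
  assumes "\<And>i. prob_space (M i)" and "finite I" and "i \<in> I" "j \<in> I" "i \<noteq> j"
    and "has_bochner_integral (M i) f r" "has_bochner_integral (M j) g s"
  shows "has_bochner_integral (PiM I M) (\<lambda>\<omega>. f (\<omega> i) * g (\<omega> j)) (r * s)"
proof -
  have "has_bochner_integral (PiM I M) (\<lambda>\<omega>. \<Prod>l\<in>{i, j}. (if l = i then f else g) (\<omega> l))
      (\<Prod>l\<in>{i, j}. integral\<^sup>L (M l) (if l = i then f else g))"
    using assms by (intro has_bochner_integral_PiM_prod_subset) (auto simp: has_bochner_integral_iff)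
  then show ?thesis
    using assms by (simp add: has_bochner_integral_iff)
qed

lemma has_bochner_integral_quad_spread_neg_parts:
  assumes "finite I" and "i \<in> I" "j \<in> I" "k \<in> I" and "i \<noteq> j" "j \<noteq> k" "k \<noteq> i"
  shows "has_bochner_integral (PiM I (\<lambda>_. std_normal))
    (\<lambda>\<omega>. quad_spread (neg_part (\<omega> i)) (neg_part (\<omega> j)) (neg_part (\<omega> k))) (3/2 - 3 / (2 * pi))"
proof -
  let ?P = "PiM I (\<lambda>_. std_normal)" and ?e = "sqrt (2 / pi) / 2"
  have sq: "has_bochner_integral ?P (\<lambda>\<omega>. (neg_part (\<omega> l))\<^sup>2) (1 / 2)" if "l \<in> I" for l
    using that assms(1) prob_space_std_normal has_bochner_integral_std_normal_neg_part_sq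
    by (intro has_bochner_integral_PiM_component)
  have pair: "has_bochner_integral ?P (\<lambda>\<omega>. neg_part (\<omega> l) * neg_part (\<omega> l')) (?e * ?e)"
    if "l \<in> I" "l' \<in> I" "l \<noteq> l'" for l l'
    using that assms(1) prob_space_std_normal has_bochner_integral_std_normal_neg_part
    by (intro has_bochner_integral_PiM_component_pair)
  have "has_bochner_integral ?P
      (\<lambda>\<omega>. quad_spread (neg_part (\<omega> i)) (neg_part (\<omega> j)) (neg_part (\<omega> k)))
      (1/2 + 1/2 + 1/2 - ?e * ?e - ?e * ?e - ?e * ?e)"
    unfolding quad_spread_def using assms
    by (intro has_bochner_integral_add has_bochner_integral_diff sq pair) auto
  moreover have "?e * ?e = 1 / (2 * pi)"
    by (simp add: real_sqrt_mult[symmetric])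
  ultimately show ?thesis by simp
qed

lemma integral_min_normal_exp_neg_sq_le:
  assumes "3 \<le> lam" and "0 < c"
  shows "(\<integral>x. exp (- c * x\<^sup>2) \<partial>min_normal lam) \<le> 1 - (3/2 - 3 / (2 * pi)) * c + 27/2 * c\<^sup>2"
proof -
  let ?P = "PiM {..<lam} (\<lambda>_. std_normal)"
  let ?R = "\<lambda>\<omega>. 1 - c * quad_spread (neg_part (\<omega> 0)) (neg_part (\<omega> 1)) (neg_part (\<omega> 2))
    + 3/2 * c\<^sup>2 * ((\<omega> 0) ^ 4 + (\<omega> 1) ^ 4 + (\<omega> 2) ^ 4)"
  interpret P: prob_space ?P by (rule prob_space_PiM_std_normal)
  have one: "has_bochner_integral ?P (\<lambda>_. 1) (1 :: real)"
    using P.prob_space by (simp add: has_bochner_integral_iff)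
  have min_meas [measurable]: "(\<lambda>\<omega>. Min (\<omega> ` {..<lam})) \<in> borel_measurable ?P"
    by (intro borel_measurable_Min_PiM_std_normal finite_lessThan)
  have fourth: "has_bochner_integral ?P (\<lambda>\<omega>. (\<omega> l) ^ 4) 3" if "l < lam" for l
    using that prob_space_std_normal integrable_std_normal_power[of 4] integral_std_normal_power4
    by (intro has_bochner_integral_PiM_component) (auto simp: has_bochner_integral_iff)
  have "has_bochner_integral ?P ?R (1 - c * (3/2 - 3 / (2 * pi)) + 3/2 * c\<^sup>2 * (3 + 3 + 3))"
    using assms(1)
    by (intro has_bochner_integral_add has_bochner_integral_diff has_bochner_integral_mult_right
        has_bochner_integral_quad_spread_neg_parts fourth one) auto
  then have R: "has_bochner_integral ?P ?R (1 - (3/2 - 3 / (2 * pi)) * c + 27/2 * c\<^sup>2)"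
    by (simp add: algebra_simps)
  have "(\<integral>x. exp (- c * x\<^sup>2) \<partial>min_normal lam) = (\<integral>\<omega>. exp (- c * (Min (\<omega> ` {..<lam}))\<^sup>2) \<partial>?P)"
    unfolding min_normal_def by (rule integral_distr) auto
  also have "\<dots> \<le> (\<integral>\<omega>. ?R \<omega> \<partial>?P)"
  proof (rule integral_mono)
    show "integrable ?P ?R"
      using R by (simp add: has_bochner_integral_iff)
    show "integrable ?P (\<lambda>\<omega>. exp (- c * (Min (\<omega> ` {..<lam}))\<^sup>2))"
      by (rule P.integrable_const_bound[where B = 1]) (use assms(2) in auto)
    show "exp (- c * (Min (\<omega> ` {..<lam}))\<^sup>2) \<le> ?R \<omega>" for \<omega>
      using assms by (intro exp_neg_min_sq_le Min_le) auto
  qed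
  also have "\<dots> = 1 - (3/2 - 3 / (2 * pi)) * c + 27/2 * c\<^sup>2"
    using R by (rule has_bochner_integral_integral_eq)
  finally show ?thesis .
qed

lemma eta_powr_neg:
  assumes "0 < n" and "0 < d_sigma"
  shows "eta n d_sigma \<omega> powr (- (2 * d_sigma * real n * c))
    = exp (c * real n) * (\<Prod>i<n. exp (- c * (\<omega> i)\<^sup>2))"
proof -
  have "eta n d_sigma \<omega> powr (- (2 * d_sigma * real n * c))
      = exp (- (2 * d_sigma * real n * c) * (1 / (2 * d_sigma) * ((\<Sum>i<n. (\<omega> i)\<^sup>2) / real n - 1)))"
    unfolding eta_def by (simp add: powr_def)
  also have "\<dots> = exp (c * real n + (\<Sum>i<n. - c * (\<omega> i)\<^sup>2))"
    using assms by (simp add: field_simps sum_distrib_left sum_negf)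
  finally show ?thesis
    by (simp add: exp_add exp_sum)
qed

lemma has_bochner_integral_xi_law_exp_neg_sq:
  assumes "1 \<le> n" and "0 \<le> c"
  shows "has_bochner_integral (xi_law lam n) (\<lambda>\<omega>. \<Prod>i<n. exp (- c * (\<omega> i)\<^sup>2))
    ((\<integral>x. exp (- c * x\<^sup>2) \<partial>min_normal lam) * (\<integral>x. exp (- c * x\<^sup>2) \<partial>std_normal) ^ (n - 1))"
proof -
  define M where "M i = (if i = 0 then min_normal lam else std_normal)" for i :: nat
  have prob: "prob_space (M i)" for i
    by (simp add: M_def prob_space_min_normal prob_space_std_normal)
  have sets: "sets (M i) = sets borel" for i
    by (simp add: M_def sets_min_normal sets_std_normal)
  have "integrable (M i) (\<lambda>x. exp (- c * x\<^sup>2))" for i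
    by (intro integrable_exp_neg_sq prob sets assms(2))
  then have "has_bochner_integral (PiM {..<n} M) (\<lambda>\<omega>. \<Prod>i<n. exp (- c * (\<omega> i)\<^sup>2))
      (\<Prod>i<n. \<integral>x. exp (- c * x\<^sup>2) \<partial>M i)"
    using prob by (intro has_bochner_integral_PiM_prod) auto
  moreover have "{..<n} = insert 0 {1..<n}"
    using assms(1) by auto
  then have "(\<Prod>i<n. \<integral>x. exp (- c * x\<^sup>2) \<partial>M i)
      = (\<integral>x. exp (- c * x\<^sup>2) \<partial>min_normal lam) * (\<integral>x. exp (- c * x\<^sup>2) \<partial>std_normal) ^ (n - 1)"
    by (simp add: M_def)
  moreover have "xi_law lam n = PiM {..<n} M"
    unfolding xi_law_def M_def ..
  ultimately show ?thesis by simp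
qed

lemma exp_mul_pow_bound_lt_one:
  fixes A B c \<gamma> K :: real and m :: nat
  assumes "0 \<le> A" "A \<le> 1 - \<gamma> * c + K * c\<^sup>2" and "0 \<le> B" "B \<le> 1 - c + 3/2 * c\<^sup>2"
    and "0 < c" "c * (K + 3/2 * real m) < \<gamma> - 1"
  shows "exp (c * (real m + 1)) * (A * B ^ m) < 1"
proof -
  have "A \<le> exp (- \<gamma> * c + K * c\<^sup>2)"
    using assms(2) exp_ge_add_one_self[of "- \<gamma> * c + K * c\<^sup>2"] by linarith
  moreover have "B \<le> exp (- c + 3/2 * c\<^sup>2)"
    using assms(4) exp_ge_add_one_self[of "- c + 3/2 * c\<^sup>2"] by linarith
  then have "B ^ m \<le> exp (real m * (- c + 3/2 * c\<^sup>2))"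
    using assms(3) power_mono[of B _ m] by (simp add: exp_of_nat_mult)
  ultimately have "exp (c * (real m + 1)) * (A * B ^ m)
      \<le> exp (c * (real m + 1)) * (exp (- \<gamma> * c + K * c\<^sup>2) * exp (real m * (- c + 3/2 * c\<^sup>2)))"
    using assms(1,3) by (intro mult_left_mono mult_mono) auto
  also have "\<dots> = exp (- c * ((\<gamma> - 1) - c * (K + 3/2 * real m)))"
    by (simp add: exp_add[symmetric] algebra_simps power2_eq_square)
  also have "\<dots> < 1"
    using assms(5,6) by simp
  finally show ?thesis .
qed

theorem lemma8:
  fixes lam n :: nat and d_sigma :: real
  assumes "lam > 2" and "n \<ge> 1" and "d_sigma > 0"
  shows "\<exists>\<alpha>>0. integrable (xi_law lam n) (\<lambda>\<omega>. eta n d_sigma \<omega> powr (-\<alpha>)) \<and>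
           (\<integral>\<omega>. eta n d_sigma \<omega> powr (-\<alpha>) \<partial>xi_law lam n) - 1 < 0"
proof -
  define \<gamma> :: real where "\<gamma> = 3/2 - 3 / (2 * pi)"
  define m where "m = n - 1"
  define L where "L = 27/2 + 3/2 * real m"
  define c where "c = (\<gamma> - 1) / (2 * (L + 1))"
  define A where "A = (\<integral>x. exp (- c * x\<^sup>2) \<partial>min_normal lam)"
  define B where "B = (\<integral>x. exp (- c * x\<^sup>2) \<partial>std_normal)"
  have "1 < \<gamma>"
    using pi_gt3 by (simp add: \<gamma>_def field_simps)
  moreover have "0 \<le> L"
    by (simp add: L_def)
  ultimately have c: "0 < c" "c * L < \<gamma> - 1"
    using mult_strict_left_mono[of 1 \<gamma> "L + 2"] by (simp_all add: c_def field_simps)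
  have "exp (c * (real m + 1)) * (A * B ^ m) < 1"
    using c assms(1) integral_min_normal_exp_neg_sq_le[of lam c] integral_std_normal_exp_neg_sq_le[of c]
    by (intro exp_mul_pow_bound_lt_one[where \<gamma> = \<gamma> and K = "27/2"])
       (auto simp: A_def B_def L_def \<gamma>_def intro: Bochner_Integration.integral_nonneg)
  moreover have "has_bochner_integral (xi_law lam n)
      (\<lambda>\<omega>. eta n d_sigma \<omega> powr (- (2 * d_sigma * real n * c))) (exp (c * real n) * (A * B ^ m))"
    using has_bochner_integral_mult_right[OF has_bochner_integral_xi_law_exp_neg_sq[OF assms(2), of c lam]]
      eta_powr_neg[of n d_sigma] assms c(1)
    by (simp add: A_def B_def m_def)
  moreover have "real n = real m + 1"
    using assms(2) by (simp add: m_def)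
  ultimately show ?thesis
    using assms(3) c(1) by (intro exI[of _ "2 * d_sigma * real n * c"]) (auto simp: has_bochner_integral_iff)
qed

end
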